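(* Let $(S,* )$ be a finite cycle set with structure monoid $M$ and permutation group $\mathcal G$. Then there is a (unique) binary operation $+$ on $\mathcal G$ such that $\psi(g+h)=\psi(g)+\psi(h)$ for all $g,h\in M$, and $(\mathcal G,+)$ is an abelian group; i.e. the commutative structure $(M,+)$ induces an abelian group structure on $\mathcal G$ compatible with $\psi\colon M\to\mathcal G$.
   Context: A cycle set is a set $S$ with a binary operation $*$ such that each $t\mapsto s*t$ is bijective and $(s*t)*(s*u)=(t*s)*(t*u)$ for all $s,t,u$. Write $S=\{s_1,\dots,s_n\}$, let $\psi(s)\in\mathfrak S_n$ satisfy $s_i*s_j=s_{\psi(s_i)(j)}$, and $\mathcal G=\langle\psi(s_1),\dots,\psi(s_n)\rangle\le\mathfrak S_n$. The structure group $G$ (resp. monoid $M$) has group (resp. monoid) presentation $\langle S\mid s(s*t)=t(t*s),\ s\neq t\rangle$; $M$ embeds in $G$. For $\sigma\in\mathfrak S_n$, $P_\sigma$ is the matrix with $1$ at $(i,\sigma(i))$. The assignment $s_i\mapsto\mathrm{diag}(1,\dots,q,\dots,1)P_{\psi(s_i)}$ ($q$ an indeterminate, in position $i$) extends to a faithful representation $\Theta$ of $G$ by monomial matrices; write $\Theta(g)=D_gP_{\psi(g)}$ with $D_g=\mathrm{diag}(q^{c_1},\dots,q^{c_n})$, which defines $\psi(g)\in\mathcal G$ (so $\psi(gh)=\psi(h)\circ\psi(g)$). The map $g\mapsto(c_1,\dots,c_n)$ is a bijection $G\to\mathbb Z^n$ restricting to a bijection $M\to\mathbb N^n$. For $g,h\in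 G$, $g+h$ denotes the unique element of $G$ with $D_{g+h}=D_gD_h$; $(G,+)$ is an abelian group and $M$ is closed under $+$. *)

theory Defs
  imports "HOL-Algebra.Bij" "HOL-Algebra.Generated_Groups"
begin

definition cycle_set :: "'a set \<Rightarrow> ('a \<Rightarrow> 'a \<Rightarrow> 'a) \<Rightarrow> bool" where
  "cycle_set S star \<longleftrightarrow>
     (\<forall>s\<in>S. bij_betw (star s) S S) \<and>
     (\<forall>s\<in>S. \<forall>t\<in>S. \<forall>u\<in>S. star (star s t) (star s u) = star (star t s) (star t u))"

definition psi :: "'a set \<Rightarrow> ('a \<Rightarrow> 'a \<Rightarrow> 'a) \<Rightarrow> 'a \<Rightarrow> ('a \<Rightarrow> 'a)" where
  "psi S star s = (\<lambda>t\<in>S. star s t)"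

definition perm_group :: "'a set \<Rightarrow> ('a \<Rightarrow> 'a \<Rightarrow> 'a) \<Rightarrow> ('a \<Rightarrow> 'a) set" where
  "perm_group S star = generate (BijGroup S) (psi S star ` S)"

text \<open>Monomial matrices D P_sigma, with D = diag(q^c_i), represented as (c, sigma).
  Product: (D_g P_s)(D_h P_t) = D_g (P_s D_h P_s^-1) P_s P_t, whose exponent vector is
  i maps to c i + d (s i), and whose permutation is t o s.\<close>
definition mono_mult :: "'a set \<Rightarrow> ('a \<Rightarrow> nat) \<times> ('a \<Rightarrow> 'a) \<Rightarrow> ('a \<Rightarrow> nat) \<times> ('a \<Rightarrow> 'a)
                           \<Rightarrow> ('a \<Rightarrow> nat) \<times> ('a \<Rightarrow> 'a)" where
  "mono_mult S x y = ((\<lambda>i. if i \<in> S then fst x i + fst y (snd x i) else 0),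
                      compose S (snd y) (snd x))"

definition theta_gen :: "'a set \<Rightarrow> ('a \<Rightarrow> 'a \<Rightarrow> 'a) \<Rightarrow> 'a \<Rightarrow> ('a \<Rightarrow> nat) \<times> ('a \<Rightarrow> 'a)" where
  "theta_gen S star s = ((\<lambda>i. if i = s then 1 else 0), psi S star s)"

text \<open>Theta of a word s_1 ... s_k (a representative of an element of the structure monoid M).\<close>
fun theta :: "'a set \<Rightarrow> ('a \<Rightarrow> 'a \<Rightarrow> 'a) \<Rightarrow> 'a list \<Rightarrow> ('a \<Rightarrow> nat) \<times> ('a \<Rightarrow> 'a)" where
  "theta S star [] = ((\<lambda>_. 0), (\<lambda>x\<in>S. x))"
| "theta S star (s # xs) = mono_mult S (theta_gen S star s) (theta S star xs)"

definition D_word :: "'a set \<Rightarrow> ('a \<Rightarrow> 'a \<Rightarrow> 'a) \<Rightarrow> 'a list \<Rightarrow> ('a \<Rightarrow> nat)" where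
  "D_word S star xs = fst (theta S star xs)"

definition psi_word :: "'a set \<Rightarrow> ('a \<Rightarrow> 'a \<Rightarrow> 'a) \<Rightarrow> 'a list \<Rightarrow> ('a \<Rightarrow> 'a)" where
  "psi_word S star xs = snd (theta S star xs)"

text \<open>Compatibility of a binary operation on the permutation group with the addition of M:
  whenever D_h'' = D_g D_h (i.e. h'' = g + h in M), psi(g + h) = psi(g) + psi(h).\<close>
definition compatible_add :: "'a set \<Rightarrow> ('a \<Rightarrow> 'a \<Rightarrow> 'a) \<Rightarrow>
     (('a \<Rightarrow> 'a) \<Rightarrow> ('a \<Rightarrow> 'a) \<Rightarrow> ('a \<Rightarrow> 'a)) \<Rightarrow> bool" where
  "compatible_add S star add \<longleftrightarrow>
     (\<forall>xs ys zs. set xs \<subseteq> S \<longrightarrow> set ys \<subseteq> S \<longrightarrow> set zs \<subseteq> S \<longrightarrow>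
        D_word S star zs = (\<lambda>i. D_word S star xs i + D_word S star ys i) \<longrightarrow>
        psi_word S star zs = add (psi_word S star xs) (psi_word S star ys))"

end

theory Submission
  imports Defs "HOL-Algebra.Multiplicative_Group"
begin

(* Words over S represent the elements of the structure monoid M, a word w having exponent
   vector D w and permutation \<Psi> w. Every vector supported in S is some D w, and D w = D w'
   forces \<Psi> w = \<Psi> w': by induction on the length, two words with the same vector are brought
   to a common first letter by the defining relation s (s*t) = t (t*s), which preserves D and,
   by the cycle set identity, also \<Psi>. So \<Psi> is a function on (M,+) = (\<nat>^S,+), and it remains
   to see that its fibres form a congruence. Since D (k @ w) = D k + D w \<circ> \<Psi> k, a word k with
   trivial permutation can be added to any word without changing its permutation. As the group
   of permutations of S is finite, every word a has a word u with \<Psi> (a @ u) = 1; if \<Psi> a = \<Psi> a',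
   then (a' @ u) + (a + y) and (a @ u) + (a' + y) have the same vector, so \<Psi> (a + y) = \<Psi> (a' + y).
   The inverse of \<Psi> a is \<Psi> b for the word b with D (a @ u) = D b + D a. *)

lemma carrier_BijGroup: "carrier (BijGroup A) = Bij A"
  by (simp add: BijGroup_def)

lemma one_BijGroup: "\<one>\<^bsub>BijGroup A\<^esub> = (\<lambda>x\<in>A. x)"
  by (simp add: BijGroup_def)

lemma mult_BijGroup: "f \<in> Bij A \<Longrightarrow> g \<in> Bij A \<Longrightarrow> f \<otimes>\<^bsub>BijGroup A\<^esub> g = compose A f g"
  by (simp add: BijGroup_def)

lemma finite_Bij:
  assumes "finite A"
  shows "finite (Bij A)"
proof (rule finite_subset)
  show "Bij A \<subseteq> A \<rightarrow>\<^sub>E A"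
    by (auto simp: Bij_def bij_betw_def PiE_def extensional_def)
  show "finite (A \<rightarrow>\<^sub>E A)"
    using assms by (simp add: finite_PiE)
qed

locale cycle_set_struct =
  fixes S :: "'a set" and star :: "'a \<Rightarrow> 'a \<Rightarrow> 'a"
  assumes cycle_set: "cycle_set S star"
begin

abbreviation D :: "'a list \<Rightarrow> 'a \<Rightarrow> nat" where "D \<equiv> D_word S star"
abbreviation \<Psi> :: "'a list \<Rightarrow> 'a \<Rightarrow> 'a" where "\<Psi> \<equiv> psi_word S star"

lemma star_bij: "s \<in> S \<Longrightarrow> bij_betw (star s) S S"
  using cycle_set by (simp add: cycle_set_def)

lemma star_closed: "s \<in> S \<Longrightarrow> i \<in> S \<Longrightarrow> star s i \<in> S"
  using star_bij bij_betwE by blast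

lemma star_eq_iff: "s \<in> S \<Longrightarrow> i \<in> S \<Longrightarrow> j \<in> S \<Longrightarrow> star s i = star s j \<longleftrightarrow> i = j"
  by (intro inj_on_eq_iff[OF bij_betw_imp_inj_on[OF star_bij]])

lemma star_image: "s \<in> S \<Longrightarrow> star s ` S = S"
  using star_bij bij_betw_imp_surj_on by blast

lemma cycle_set_identity:
  "s \<in> S \<Longrightarrow> t \<in> S \<Longrightarrow> u \<in> S \<Longrightarrow> star (star s t) (star s u) = star (star t s) (star t u)"
  using cycle_set by (simp add: cycle_set_def)

lemma psi_in_Bij: "s \<in> S \<Longrightarrow> psi S star s \<in> Bij S"
  using star_bij by (auto simp: Bij_def psi_def bij_betw_restrict_eq)

lemma compose_psi_cycle_set_identity:
  assumes "s \<in> S" and "t \<in> S"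
  shows "compose S (psi S star (star s t)) (psi S star s) = compose S (psi S star (star t s)) (psi S star t)"
proof
  fix i
  show "compose S (psi S star (star s t)) (psi S star s) i = compose S (psi S star (star t s)) (psi S star t) i"
    using assms cycle_set_identity[OF assms, of i] by (simp add: compose_def psi_def star_closed)
qed

lemma D_word_Nil: "D [] = (\<lambda>_. 0)"
  by (simp add: D_word_def)

lemma psi_word_Nil: "\<Psi> [] = (\<lambda>x\<in>S. x)"
  by (simp add: psi_word_def)

lemma D_word_Cons:
  "D (s # w) = (\<lambda>i. if i \<in> S then (if i = s then 1 else 0) + D w (star s i) else 0)"
  by (auto simp: D_word_def mono_mult_def theta_gen_def psi_def fun_eq_iff)

lemma psi_word_Cons: "\<Psi> (s # w) = compose S (\<Psi> w) (psi S star s)"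
  by (simp add: psi_word_def mono_mult_def theta_gen_def)

lemma D_word_outside: "i \<notin> S \<Longrightarrow> D w i = 0"
  by (cases w) (auto simp: D_word_Nil D_word_Cons)

lemma psi_word_extensional: "\<Psi> w \<in> extensional S"
  by (cases w) (auto simp: psi_word_Nil psi_word_Cons compose_def)

lemma psi_word_in_Bij: "set w \<subseteq> S \<Longrightarrow> \<Psi> w \<in> Bij S"
  by (induction w) (auto simp: psi_word_Nil psi_word_Cons id_Bij compose_Bij psi_in_Bij)

lemma psi_word_single: "s \<in> S \<Longrightarrow> \<Psi> [s] = psi S star s"
  by (auto simp: fun_eq_iff psi_word_Cons psi_word_Nil compose_def psi_def star_closed)

lemma D_word_append:
  "set w \<subseteq> S \<Longrightarrow> D (w @ u) = (\<lambda>i. if i \<in> S then D w i + D u (\<Psi> w i) else 0)"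
proof (induction w)
  case Nil
  then show ?case by (auto simp: fun_eq_iff D_word_Nil psi_word_Nil D_word_outside)
next
  case (Cons s w)
  then have s: "s \<in> S" and IH: "D (w @ u) = (\<lambda>i. if i \<in> S then D w i + D u (\<Psi> w i) else 0)"
    by auto
  show ?case
  proof
    fix i
    show "D ((s # w) @ u) i = (if i \<in> S then D (s # w) i + D u (\<Psi> (s # w) i) else 0)"
      using star_closed[OF s, of i] by (simp add: D_word_Cons IH psi_word_Cons compose_eq psi_def)
  qed
qed

lemma psi_word_append: "set w \<subseteq> S \<Longrightarrow> \<Psi> (w @ u) = compose S (\<Psi> u) (\<Psi> w)"
proof (induction w)
  case Nil
  show ?case
    using psi_word_extensional[of u] by (auto simp: fun_eq_iff psi_word_Nil compose_def extensional_def)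
next
  case (Cons s w)
  then show ?case
    by (simp add: psi_word_Cons compose_assoc[OF Bij_imp_funcset[OF psi_in_Bij]])
qed

lemma psi_word_replicate:
  assumes "set w \<subseteq> S"
  shows "\<Psi> (concat (replicate n w)) = \<Psi> w [^]\<^bsub>BijGroup S\<^esub> n"
proof (induction n)
  case 0
  show ?case by (simp add: psi_word_Nil one_BijGroup)
next
  case (Suc n)
  have "\<Psi> w [^]\<^bsub>BijGroup S\<^esub> n \<in> Bij S"
    using monoid.nat_pow_closed[OF group.is_monoid[OF group_BijGroup]] psi_word_in_Bij[OF assms]
    by (simp add: carrier_BijGroup)
  then show ?case
    using assms Suc.IH psi_word_in_Bij[OF assms]
    by (simp add: psi_word_append mult_BijGroup)
qed

lemma psi_word_in_perm_group: "set w \<subseteq> S \<Longrightarrow> \<Psi> w \<in> perm_group S star"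
proof (induction w)
  case Nil
  show ?case
    unfolding perm_group_def psi_word_Nil one_BijGroup[symmetric] by (rule generate.one)
next
  case (Cons s w)
  then have "\<Psi> w \<otimes>\<^bsub>BijGroup S\<^esub> psi S star s \<in> perm_group S star"
    unfolding perm_group_def by (auto intro: generate.eng generate.incl)
  with Cons.prems show ?case
    by (simp add: psi_word_Cons mult_BijGroup psi_word_in_Bij psi_in_Bij)
qed

lemma D_word_Cons_cong: "D u = D v \<Longrightarrow> D (s # u) = D (s # v)"
  by (simp only: D_word_Cons)

lemma D_word_Cons_cancel:
  assumes "s \<in> S" and "D (s # u) = D (s # v)"
  shows "D u = D v"
proof
  fix j
  show "D u j = D v j"
  proof (cases "j \<in> S")
    case True
    then obtain i where "i \<in> S" "j = star s i"
      using star_image[OF assms(1)] by blast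
    then show ?thesis
      using fun_cong[OF assms(2), of i] by (simp add: D_word_Cons)
  qed (simp add: D_word_outside)
qed

lemma D_word_swap:
  assumes "s \<in> S" and "t \<in> S"
  shows "D (s # star s t # w) = D (t # star t s # w)"
proof
  fix i
  show "D (s # star s t # w) i = D (t # star t s # w) i"
  proof (cases "i \<in> S")
    case True
    then show ?thesis
      using assms cycle_set_identity[OF assms True] by (simp add: D_word_Cons star_closed star_eq_iff)
  qed (simp add: D_word_outside)
qed

lemma psi_word_swap:
  assumes "s \<in> S" and "t \<in> S"
  shows "\<Psi> (s # star s t # w) = \<Psi> (t # star t s # w)"
proof -
  have "\<Psi> (s # star s t # w) = compose S (\<Psi> w) (compose S (psi S star (star s t)) (psi S star s))"
    by (simp add: psi_word_Cons compose_assoc[OF Bij_imp_funcset[OF psi_in_Bij[OF assms(1)]]])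
  also have "\<dots> = compose S (\<Psi> w) (compose S (psi S star (star t s)) (psi S star t))"
    by (simp add: compose_psi_cycle_set_identity assms)
  also have "\<dots> = \<Psi> (t # star t s # w)"
    by (simp add: psi_word_Cons compose_assoc[OF Bij_imp_funcset[OF psi_in_Bij[OF assms(2)]]])
  finally show ?thesis .
qed

end

locale finite_cycle_set = cycle_set_struct +
  assumes finite_carrier: "finite S"
begin

lemma sum_D_word: "set w \<subseteq> S \<Longrightarrow> (\<Sum>i\<in>S. D w i) = length w"
proof (induction w)
  case Nil
  then show ?case by (simp add: D_word_Nil)
next
  case (Cons s w)
  then have "(\<Sum>i\<in>S. D (s # w) i) = (\<Sum>i\<in>S. (if i = s then 1 else 0)) + (\<Sum>i\<in>S. D w (star s i))"
    by (simp add: D_word_Cons sum.distrib)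
  also have "\<dots> = 1 + (\<Sum>i\<in>S. D w i)"
    using Cons.prems finite_carrier sum.reindex_bij_betw[OF star_bij, of s "D w"] by simp
  finally show ?case using Cons by simp
qed

lemma length_eq_if_D_word_eq:
  "set w \<subseteq> S \<Longrightarrow> set w' \<subseteq> S \<Longrightarrow> D w = D w' \<Longrightarrow> length w = length w'"
  using sum_D_word by metis

lemma ex_Cons_decomposition:
  fixes c :: "'a \<Rightarrow> nat"
  assumes x: "x \<in> S" "0 < c x" and c: "\<forall>i. i \<notin> S \<longrightarrow> c i = 0"
  obtains d where "\<forall>i. i \<notin> S \<longrightarrow> d i = 0" and "(\<Sum>i\<in>S. d i) < (\<Sum>i\<in>S. c i)"
    and "(\<lambda>i. if i \<in> S then (if i = x then 1 else 0) + d (star x i) else 0) = c"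
proof
  define d where
    "d j = (if j \<in> S then c (inv_into S (star x) j) - (if inv_into S (star x) j = x then 1 else 0) else 0)"
    for j
  have d_star: "d (star x i) = c i - (if i = x then 1 else 0)" if "i \<in> S" for i
    using that star_closed[OF x(1) that] inv_into_f_f[OF bij_betw_imp_inj_on[OF star_bij[OF x(1)]] that]
    by (simp add: d_def)
  show "\<forall>i. i \<notin> S \<longrightarrow> d i = 0"
    by (simp add: d_def)
  show "(\<lambda>i. if i \<in> S then (if i = x then 1 else 0) + d (star x i) else 0) = c"
    using x c by (auto simp: fun_eq_iff d_star)
  have "(\<Sum>i\<in>S. d i) = (\<Sum>i\<in>S. d (star x i))"
    using sum.reindex_bij_betw[OF star_bij[OF x(1)], of d] by simp
  also have "\<dots> = (\<Sum>i\<in>S. c i - (if i = x then 1 else 0))"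
    by (rule sum.cong) (simp_all add: d_star)
  also have "\<dots> < (\<Sum>i\<in>S. c i)"
    using x finite_carrier by (intro sum_strict_mono_ex1) auto
  finally show "(\<Sum>i\<in>S. d i) < (\<Sum>i\<in>S. c i)" .
qed

lemma D_word_surj:
  fixes c :: "'a \<Rightarrow> nat"
  assumes "\<forall>i. i \<notin> S \<longrightarrow> c i = 0"
  shows "\<exists>w. set w \<subseteq> S \<and> D w = c"
  using assms
proof (induction "\<Sum>i\<in>S. c i" arbitrary: c rule: less_induct)
  case less
  show ?case
  proof (cases "\<exists>x\<in>S. 0 < c x")
    case True
    then obtain x where x: "x \<in> S" "0 < c x" by blast
    obtain d where d: "\<forall>i. i \<notin> S \<longrightarrow> d i = 0" "(\<Sum>i\<in>S. d i) < (\<Sum>i\<in>S. c i)"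
      and c: "(\<lambda>i. if i \<in> S then (if i = x then 1 else 0) + d (star x i) else 0) = c"
      using ex_Cons_decomposition[OF x less.prems] .
    obtain w where w: "set w \<subseteq> S" "D w = d"
      using less.hyps[OF d(2,1)] by blast
    have "D (x # w) = c"
      unfolding D_word_Cons w(2) by (rule c)
    with x w(1) show ?thesis
      by (intro exI[of _ "x # w"]) simp
  next
    case False
    then have "c = (\<lambda>_. 0)"
      using less.prems by (auto simp: fun_eq_iff)
    then show ?thesis
      by (intro exI[of _ "[]"]) (simp add: D_word_Nil)
  qed
qed

lemma D_word_Cons_split:
  assumes "x \<in> S" and "0 < D w x"
  obtains w' where "set w' \<subseteq> S" and "D (x # w') = D w"
proof -
  have "\<forall>i. i \<notin> S \<longrightarrow> D w i = 0"
    by (simp add: D_word_outside)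
  then obtain d where d: "\<forall>i. i \<notin> S \<longrightarrow> d i = 0" "(\<Sum>i\<in>S. d i) < (\<Sum>i\<in>S. D w i)"
    and w: "(\<lambda>i. if i \<in> S then (if i = x then 1 else 0) + d (star x i) else 0) = D w"
    by (rule ex_Cons_decomposition[of x "D w", OF assms])
  obtain w' where w': "set w' \<subseteq> S" "D w' = d"
    using D_word_surj[OF d(1)] by blast
  have "D (x # w') = D w"
    unfolding D_word_Cons w'(2) by (rule w)
  with w'(1) show ?thesis
    by (rule that)
qed

lemma D_word_Cons_eq_Cons:
  assumes s: "s \<in> S" and t: "t \<in> S" and "s \<noteq> t" and D_eq: "D (s # u) = D (t # v)"
  obtains u' v' where "set u' \<subseteq> S" and "set v' \<subseteq> S"
    and "D (star s t # u') = D u" and "D (star t s # v') = D v" and "D u' = D v'"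
proof -
  have st: "star s t \<in> S" "star t s \<in> S"
    using s t star_closed by auto
  have "0 < D u (star s t)"
    using fun_cong[OF D_eq, of t] \<open>s \<noteq> t\<close> t by (simp add: D_word_Cons)
  then obtain u' where u': "set u' \<subseteq> S" "D (star s t # u') = D u"
    using D_word_Cons_split[OF st(1)] by blast
  have "0 < D v (star t s)"
    using fun_cong[OF D_eq, of s] \<open>s \<noteq> t\<close> s by (simp add: D_word_Cons)
  then obtain v' where v': "set v' \<subseteq> S" "D (star t s # v') = D v"
    using D_word_Cons_split[OF st(2)] by blast
  have "D (s # star s t # u') = D (s # u)"
    using D_word_Cons_cong[OF u'(2)] .
  also have "\<dots> = D (t # star t s # v')"
    using D_eq D_word_Cons_cong[OF v'(2)] by simp
  also have "\<dots> = D (s # star s t # v')"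
    using D_word_swap[OF t s] .
  finally have "D u' = D v'"
    by (rule D_word_Cons_cancel[OF st(1) D_word_Cons_cancel[OF s]])
  with u' v' show ?thesis
    using that by blast
qed

theorem D_word_eq_imp_psi_word_eq:
  assumes "set w \<subseteq> S" and "set w' \<subseteq> S" and "D w = D w'"
  shows "\<Psi> w = \<Psi> w'"
  using assms
proof (induction "length w" arbitrary: w w' rule: less_induct)
  case less
  note IH = less.hyps
  have length_w': "length w' = length w"
    using length_eq_if_D_word_eq[OF less.prems] by simp
  show ?case
  proof (cases w)
    case Nil
    then show ?thesis using length_w' by simp
  next
    case (Cons s u)
    then obtain t v where w': "w' = t # v"
      using length_w' by (cases w') auto
    have s: "s \<in> S" "set u \<subseteq> S" and t: "t \<in> S" "set v \<subseteq> S"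
      using less.prems Cons w' by auto
    have D_eq: "D (s # u) = D (t # v)"
      using less.prems Cons w' by simp
    show ?thesis
    proof (cases "s = t")
      case True
      then have "D u = D v"
        using D_word_Cons_cancel[OF s(1)] D_eq by blast
      then show ?thesis
        using IH[of u v] Cons w' True s t by (simp add: psi_word_Cons)
    next
      case False
      obtain u' v' where words: "set u' \<subseteq> S" "set v' \<subseteq> S"
        and u': "D (star s t # u') = D u" and v': "D (star t s # v') = D v" and "D u' = D v'"
        by (rule D_word_Cons_eq_Cons[OF s(1) t(1) False D_eq])
      have st: "star s t \<in> S" "star t s \<in> S"
        using s t star_closed by auto
      have length_u: "length u = Suc (length u')"
        using length_eq_if_D_word_eq[of "star s t # u'" u] u' words s st by simp
      have length_v: "length v < length w"
        using length_w' w' by simp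
      have "\<Psi> w = \<Psi> (s # star s t # u')"
        using IH[of u "star s t # u'"] Cons u' words s st by (simp add: psi_word_Cons)
      also have "\<dots> = \<Psi> (s # star s t # v')"
        using IH[of u' v'] \<open>D u' = D v'\<close> Cons length_u words by (simp add: psi_word_Cons)
      also have "\<dots> = \<Psi> (t # star t s # v')"
        using psi_word_swap[OF s(1) t(1)] .
      also have "\<dots> = \<Psi> w'"
        using IH[of v "star t s # v'"] length_v v' words w' t st by (simp add: psi_word_Cons)
      finally show ?thesis .
    qed
  qed
qed

lemma ex_inverse_word:
  assumes "set w \<subseteq> S"
  obtains u where "set u \<subseteq> S" and "\<Psi> (w @ u) = (\<lambda>x\<in>S. x)"
proof -
  let ?n = "order (BijGroup S)"
  have "0 < ?n"
    using finite_Bij[OF finite_carrier]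
    by (simp add: monoid.order_gt_0_iff_finite[OF group.is_monoid[OF group_BijGroup]] carrier_BijGroup)
  then have "w @ concat (replicate (?n - 1) w) = concat (replicate ?n w)"
    by (cases ?n) auto
  then have "\<Psi> (w @ concat (replicate (?n - 1) w)) = \<Psi> w [^]\<^bsub>BijGroup S\<^esub> ?n"
    using psi_word_replicate[OF assms] by simp
  also have "\<dots> = (\<lambda>x\<in>S. x)"
    using group.pow_order_eq_1[OF group_BijGroup] psi_word_in_Bij[OF assms]
    by (simp add: carrier_BijGroup one_BijGroup)
  finally show ?thesis
    using assms by (intro that[of "concat (replicate (?n - 1) w)"]) auto
qed

lemma perm_group_eq_psi_word_image: "perm_group S star = \<Psi> ` {w. set w \<subseteq> S}"
proof
  show "perm_group S star \<subseteq> \<Psi> ` {w. set w \<subseteq> S}"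
    unfolding perm_group_def
  proof
    fix x
    assume "x \<in> generate (BijGroup S) (psi S star ` S)"
    then show "x \<in> \<Psi> ` {w. set w \<subseteq> S}"
    proof (induction rule: generate.induct)
      case one
      show ?case by (rule image_eqI[of _ _ "[]"]) (simp_all add: psi_word_Nil one_BijGroup)
    next
      case (incl h)
      then show ?case by (auto simp: image_iff psi_word_single intro: exI[of _ "[_]"])
    next
      case (inv h)
      then obtain s where s: "s \<in> S" "h = psi S star s" by blast
      obtain u where u: "set u \<subseteq> S" "\<Psi> ([s] @ u) = (\<lambda>x\<in>S. x)"
        using ex_inverse_word[of "[s]"] s by auto
      have "\<Psi> u \<otimes>\<^bsub>BijGroup S\<^esub> h = \<one>\<^bsub>BijGroup S\<^esub>"
        using u s by (simp add: psi_word_append psi_word_single mult_BijGroup psi_word_in_Bij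
            psi_in_Bij one_BijGroup del: append_Cons)
      then have "inv\<^bsub>BijGroup S\<^esub> h = \<Psi> u"
        using group.inv_equality[OF group_BijGroup] psi_word_in_Bij[OF u(1)] psi_in_Bij[OF s(1)] s
        by (simp add: carrier_BijGroup)
      then show ?case using u by auto
    next
      case (eng h1 h2)
      then obtain w1 w2 where "set w1 \<subseteq> S" "set w2 \<subseteq> S" "h1 = \<Psi> w1" "h2 = \<Psi> w2" by auto
      then have "h1 \<otimes>\<^bsub>BijGroup S\<^esub> h2 = \<Psi> (w2 @ w1)" "set (w2 @ w1) \<subseteq> S"
        by (simp_all add: psi_word_append mult_BijGroup psi_word_in_Bij)
      then show ?case by blast
    qed
  qed
  show "\<Psi> ` {w. set w \<subseteq> S} \<subseteq> perm_group S star"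
    using psi_word_in_perm_group by blast
qed

definition word_sum :: "'a list \<Rightarrow> 'a list \<Rightarrow> 'a list" where
  "word_sum a b = (SOME c. set c \<subseteq> S \<and> D c = (\<lambda>i. D a i + D b i))"

lemma set_word_sum: "set (word_sum a b) \<subseteq> S"
  and D_word_word_sum: "D (word_sum a b) = (\<lambda>i. D a i + D b i)"
proof -
  have "\<exists>c. set c \<subseteq> S \<and> D c = (\<lambda>i. D a i + D b i)"
    using D_word_surj by (simp add: D_word_outside)
  then have "set (word_sum a b) \<subseteq> S \<and> D (word_sum a b) = (\<lambda>i. D a i + D b i)"
    unfolding word_sum_def by (rule someI_ex)
  then show "set (word_sum a b) \<subseteq> S" "D (word_sum a b) = (\<lambda>i. D a i + D b i)"
    by auto
qed

lemma psi_word_eq_psi_word_sum: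
  "set c \<subseteq> S \<Longrightarrow> D c = (\<lambda>i. D a i + D b i) \<Longrightarrow> \<Psi> c = \<Psi> (word_sum a b)"
  by (rule D_word_eq_imp_psi_word_eq) (simp_all add: set_word_sum D_word_word_sum)

lemma psi_word_sum_commute: "\<Psi> (word_sum a b) = \<Psi> (word_sum b a)"
  by (rule D_word_eq_imp_psi_word_eq) (simp_all add: set_word_sum D_word_word_sum add.commute)

lemma psi_word_sum_kernel:
  assumes "set k \<subseteq> S" and "set w \<subseteq> S" and "\<Psi> k = (\<lambda>x\<in>S. x)"
  shows "\<Psi> (word_sum k w) = \<Psi> w"
proof -
  have "D (k @ w) = (\<lambda>i. D k i + D w i)"
    using assms by (auto simp: fun_eq_iff D_word_append D_word_outside)
  then have "\<Psi> (k @ w) = \<Psi> (word_sum k w)"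
    using assms psi_word_eq_psi_word_sum[of "k @ w" k w] by simp
  moreover have "\<Psi> (k @ w) = \<Psi> w"
    using assms psi_word_extensional[of w]
    by (auto simp: fun_eq_iff psi_word_append compose_def extensional_def)
  ultimately show ?thesis by simp
qed

lemma psi_word_sum_Nil: "set a \<subseteq> S \<Longrightarrow> \<Psi> (word_sum [] a) = \<Psi> a"
  by (rule D_word_eq_imp_psi_word_eq) (simp_all add: set_word_sum D_word_word_sum D_word_Nil)

lemma psi_word_sum_assoc: "\<Psi> (word_sum (word_sum a b) c) = \<Psi> (word_sum a (word_sum b c))"
  by (rule D_word_eq_imp_psi_word_eq) (simp_all add: set_word_sum D_word_word_sum add.assoc)

lemma psi_word_sum_cong_left:
  assumes a: "set a \<subseteq> S" "set a' \<subseteq> S" and y: "set y \<subseteq> S" and eq: "\<Psi> a = \<Psi> a'"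
  shows "\<Psi> (word_sum a y) = \<Psi> (word_sum a' y)"
proof -
  obtain u where u: "set u \<subseteq> S" "\<Psi> (a @ u) = (\<lambda>x\<in>S. x)"
    using ex_inverse_word[OF a(1)] .
  have u': "\<Psi> (a' @ u) = (\<lambda>x\<in>S. x)"
    using u(2) eq by (simp add: psi_word_append a)
  have "D (word_sum (a' @ u) (word_sum a y)) = D (word_sum (a @ u) (word_sum a' y))"
    using eq a by (auto simp: fun_eq_iff D_word_word_sum D_word_append D_word_outside)
  then have "\<Psi> (word_sum (a' @ u) (word_sum a y)) = \<Psi> (word_sum (a @ u) (word_sum a' y))"
    by (rule D_word_eq_imp_psi_word_eq[rotated 2]) (simp_all add: set_word_sum)
  then show ?thesis
    using psi_word_sum_kernel a u u' by (simp add: set_word_sum)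
qed

lemma psi_word_sum_cong:
  assumes "set a \<subseteq> S" "set a' \<subseteq> S" "set b \<subseteq> S" "set b' \<subseteq> S"
    and "\<Psi> a = \<Psi> a'" "\<Psi> b = \<Psi> b'"
  shows "\<Psi> (word_sum a b) = \<Psi> (word_sum a' b')"
proof -
  have "\<Psi> (word_sum a b) = \<Psi> (word_sum a' b)"
    using assms psi_word_sum_cong_left by blast
  also have "\<dots> = \<Psi> (word_sum b a')"
    by (rule psi_word_sum_commute)
  also have "\<dots> = \<Psi> (word_sum b' a')"
    using assms psi_word_sum_cong_left by blast
  also have "\<dots> = \<Psi> (word_sum a' b')"
    by (rule psi_word_sum_commute)
  finally show ?thesis .
qed

definition perm_add :: "('a \<Rightarrow> 'a) \<Rightarrow> ('a \<Rightarrow> 'a) \<Rightarrow> 'a \<Rightarrow> 'a" where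
  "perm_add \<sigma> \<tau> =
     (SOME \<rho>. \<exists>a b. set a \<subseteq> S \<and> set b \<subseteq> S \<and> \<Psi> a = \<sigma> \<and> \<Psi> b = \<tau> \<and> \<Psi> (word_sum a b) = \<rho>)"

lemma perm_add_psi_word [simp]:
  assumes "set a \<subseteq> S" and "set b \<subseteq> S"
  shows "perm_add (\<Psi> a) (\<Psi> b) = \<Psi> (word_sum a b)"
proof -
  let ?P = "\<lambda>\<rho>. \<exists>a' b'. set a' \<subseteq> S \<and> set b' \<subseteq> S \<and> \<Psi> a' = \<Psi> a \<and> \<Psi> b' = \<Psi> b \<and>
    \<Psi> (word_sum a' b') = \<rho>"
  have "?P (perm_add (\<Psi> a) (\<Psi> b))"
    unfolding perm_add_def by (rule someI[of ?P "\<Psi> (word_sum a b)"]) (use assms in blast)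
  then show ?thesis
    using psi_word_sum_cong assms by metis
qed

lemma ex_perm_add_inverse:
  assumes a: "set a \<subseteq> S"
  obtains b where "set b \<subseteq> S" and "perm_add (\<Psi> b) (\<Psi> a) = (\<lambda>x\<in>S. x)"
proof -
  obtain u where u: "set u \<subseteq> S" "\<Psi> (a @ u) = (\<lambda>x\<in>S. x)"
    using ex_inverse_word[OF a] .
  obtain b where b: "set b \<subseteq> S" "D b = (\<lambda>i. if i \<in> S then D u (\<Psi> a i) else 0)"
    using D_word_surj[of "\<lambda>i. if i \<in> S then D u (\<Psi> a i) else 0"] by auto
  have "D (a @ u) = (\<lambda>i. D b i + D a i)"
    using a b(2) by (auto simp: fun_eq_iff D_word_append D_word_outside)
  then have "perm_add (\<Psi> b) (\<Psi> a) = \<Psi> (a @ u)"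
    using psi_word_eq_psi_word_sum[of "a @ u" b a] a u(1) b(1) by simp
  with b(1) u(2) show ?thesis
    using that by simp
qed

theorem comm_group_perm_add:
  "comm_group \<lparr>carrier = perm_group S star, mult = perm_add, one = (\<lambda>x\<in>S. x)\<rparr>"
proof (rule comm_groupI, simp_all only: monoid.simps partial_object.simps
    perm_group_eq_psi_word_image psi_word_Nil[symmetric])
  show "perm_add \<sigma> \<tau> \<in> \<Psi> ` {w. set w \<subseteq> S}"
    if "\<sigma> \<in> \<Psi> ` {w. set w \<subseteq> S}" "\<tau> \<in> \<Psi> ` {w. set w \<subseteq> S}" for \<sigma> \<tau>
    using that set_word_sum by auto
  show "\<Psi> [] \<in> \<Psi> ` {w. set w \<subseteq> S}"
    by auto
  show "perm_add (perm_add \<sigma> \<tau>) \<rho> = perm_add \<sigma> (perm_add \<tau> \<rho>)"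
    if "\<sigma> \<in> \<Psi> ` {w. set w \<subseteq> S}" "\<tau> \<in> \<Psi> ` {w. set w \<subseteq> S}" "\<rho> \<in> \<Psi> ` {w. set w \<subseteq> S}"
    for \<sigma> \<tau> \<rho>
    using that by (auto simp: set_word_sum psi_word_sum_assoc)
  show "perm_add \<sigma> \<tau> = perm_add \<tau> \<sigma>"
    if "\<sigma> \<in> \<Psi> ` {w. set w \<subseteq> S}" "\<tau> \<in> \<Psi> ` {w. set w \<subseteq> S}" for \<sigma> \<tau>
    using that psi_word_sum_commute by auto
  show "perm_add (\<Psi> []) \<sigma> = \<sigma>" if "\<sigma> \<in> \<Psi> ` {w. set w \<subseteq> S}" for \<sigma>
    using that by (auto simp: psi_word_sum_Nil)
  show "\<exists>\<tau>\<in>\<Psi> ` {w. set w \<subseteq> S}. perm_add \<tau> \<sigma> = \<Psi> []"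
    if "\<sigma> \<in> \<Psi> ` {w. set w \<subseteq> S}" for \<sigma>
    using that ex_perm_add_inverse by (fastforce simp: psi_word_Nil)
qed

lemma compatible_add_perm_add: "compatible_add S star perm_add"
  unfolding compatible_add_def using psi_word_eq_psi_word_sum by auto

lemma compatible_add_unique:
  assumes "compatible_add S star add'"
    and "\<sigma> \<in> perm_group S star" and "\<tau> \<in> perm_group S star"
  shows "add' \<sigma> \<tau> = perm_add \<sigma> \<tau>"
proof -
  obtain a b where ab: "set a \<subseteq> S" "set b \<subseteq> S" "\<sigma> = \<Psi> a" "\<tau> = \<Psi> b"
    using assms(2,3) by (auto simp: perm_group_eq_psi_word_image)
  have "\<Psi> (word_sum a b) = add' (\<Psi> a) (\<Psi> b)"
    using assms(1)[unfolded compatible_add_def, rule_format, OF ab(1,2) set_word_sum D_word_word_sum] .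
  with ab show ?thesis
    by simp
qed

end

theorem mainTheorem13:
  fixes S :: "'a set" and star :: "'a \<Rightarrow> 'a \<Rightarrow> 'a"
  assumes "finite S" and "cycle_set S star"
  shows "\<exists>add zero.
           comm_group \<lparr>carrier = perm_group S star, mult = add, one = zero\<rparr> \<and>
           compatible_add S star add \<and>
           (\<forall>add'. compatible_add S star add' \<longrightarrow>
              (\<forall>x\<in>perm_group S star. \<forall>y\<in>perm_group S star. add' x y = add x y))"
proof -
  interpret finite_cycle_set S star
    using assms by (simp add: finite_cycle_set_def finite_cycle_set_axioms_def cycle_set_struct_def)
  show ?thesis
    using comm_group_perm_add compatible_add_perm_add compatible_add_unique by blast
qed

end
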